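(* Let $k,m,n,l$ be positive integers with $nl+ml\le k$ and $q$ a prime power. Let $\mathbb{L}$ be the set of $l$-dimensional subspaces of $\mathbb{F}_q^k$ and let $\mathbb{X}=\{\{L_1,\dots,L_n\}\subseteq\mathbb{L}:\dim(L_1+\cdots+L_n)=nl\}$, $\mathbb{Y}=\{\{L_1,\dots,L_m\}\subseteq\mathbb{L}:\dim(L_1+\cdots+L_m)=ml\}$, $\mathbb{Z}=\{\{L_1,\dots,L_{n+m}\}\subseteq\mathbb{L}:\dim(L_1+\cdots+L_{n+m})=(n+m)l\}$. Let $B$ be the bipartite graph with left vertex set $\mathbb{X}$, right vertex set $\mathbb{Y}$, and $X$ adjacent to $Y$ iff $X\cup Y\in\mathbb{Z}$. Put $P=\prod_{i=0}^{l-1}\binom{l-i}{1}_q$, $y_1=\prod_{i=0}^{n-1}\binom{(n-i)l}{l}$, $y_2=\prod_{i=0}^{m-1}\binom{(m-i)l}{l}$. Then $$|\mathbb{X}|=\frac{(l!)^n q^{\frac{n(n-1)l^2}{2}}}{(nl)!\,n!}\cdot\frac{\prod_{i=0}^{nl-1}\binom{k-i}{1}_q}{P^n}\,y_1,\qquad |\mathbb{Y}|=\frac{(l!)^m q^{\frac{m(m-1)l^2}{2}}}{(ml)!\,m!}\cdot\frac{\prod_{i=0}^{ml-1}\binom{k-i}{1}_q}{P^m}\,y_2,$$ and every $X\in\mathbb{X}$ has exactly $$\frac{(l!)^m q^{ml^2\left(\frac{m-1}{2}+n\right)}}{(ml)!\,m!}\cdot\frac{\prod_{i=0}^{ml-1}\binom{k-nl-i}{1}_q}{P^m}\,y_2$$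 neighbours in $B$.
   Context: $\binom{a}{1}_q=\frac{q^a-1}{q-1}$; $\binom{(n-i)l}{l}$ etc. are ordinary binomial coefficients. *)

theory Defs
  imports "HOL-Analysis.Analysis"
begin

definition qbin1 :: "nat \<Rightarrow> nat \<Rightarrow> real" where
  "qbin1 q a = (real q ^ a - 1) / (real q - 1)"

text \<open>The set of l-dimensional subspaces of the space F^k, modelled as 'a^'n
  with 'a a finite field and k = CARD('n).\<close>
definition subspaces_dim :: "nat \<Rightarrow> (('a::field)^'n) set set" where
  "subspaces_dim l = {V. vec.subspace V \<and> vec.dim V = l}"

text \<open>Sets of r distinct l-dimensional subspaces whose sum has dimension r*l.
  The sum of the subspaces in S is the span of their union.\<close>
definition indep_family :: "nat \<Rightarrow> nat \<Rightarrow> (('a::field)^'n) set set set" where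
  "indep_family l r = {S. S \<subseteq> subspaces_dim l \<and> card S = r \<and>
       vec.dim (vec.span (\<Union>S)) = r * l}"

end

theory Submission
  imports Defs "HOL-Combinatorics.Multiset_Permutations"
begin

text \<open>
  Everything is counted through ordered tuples. An ordered list of \<open>r\<close> vectors of a subspace
  \<open>U\<close> that enlarges the dimension of a set \<open>W\<close> by \<open>r\<close> is chosen vector by vector, so there
  are \<open>\<Prod>i<r. q^dim U - q^(dim W + i)\<close> of them. Grouping the independent \<open>l\<close>-lists that
  extend \<open>W\<close> by the subspace they span counts the \<open>l\<close>-subspaces independent of \<open>W\<close>, each
  being spanned by \<open>\<Prod>i<l. q^l - q^i\<close> of these lists. Choosing the subspaces of a family one
  after another multiplies these counts, and every family arises from \<open>r!\<close> orderings.
  Writing \<open>q^a - q^b = q^b (q - 1) [a - b]_q\<close> gives the closed form. The neighbours of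
  \<open>X\<close> are exactly the \<open>m\<close>-families independent of \<open>\<Union>X\<close>, which has dimension \<open>nl\<close>.
\<close>

context vector_space
begin

lemma card_span_independent:
  assumes "finite B" "independent B"
  shows "card (span B) = CARD('a) ^ card B"
  using assms
proof (induction B rule: finite_induct)
  case empty
  then show ?case by simp
next
  case (insert v B)
  have indep: "independent B" and v: "v \<notin> span B"
    using insert by (auto simp: independent_insert)
  have span_insert_eq: "span (insert v B) = (\<lambda>(c, y). c *s v + y) ` (UNIV \<times> span B)"
  proof (intro equalityI subsetI)
    fix x assume "x \<in> span (insert v B)"
    then obtain c where "x - c *s v \<in> span B"
      by (auto simp: span_insert)
    then show "x \<in> (\<lambda>(c, y). c *s v + y) ` (UNIV \<times> span B)"
      by (intro image_eqI[of _ _ "(c, x - c *s v)"]) auto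
  next
    fix x assume "x \<in> (\<lambda>(c, y). c *s v + y) ` (UNIV \<times> span B)"
    then obtain c y where "x = c *s v + y" "y \<in> span B"
      by auto
    moreover have "span B \<subseteq> span (insert v B)"
      by (rule span_mono) blast
    ultimately show "x \<in> span (insert v B)"
      by (metis span_add span_scale span_base insertI1 subsetD)
  qed
  have "inj_on (\<lambda>(c, y). c *s v + y) (UNIV \<times> span B)"
  proof (rule inj_onI, clarify)
    fix c y d z
    assume y: "y \<in> span B" and z: "z \<in> span B" and eq: "c *s v + y = d *s v + z"
    show "c = d \<and> y = z"
    proof (cases "c = d")
      case False
      have "(c - d) *s v = z - y"
        using eq by (simp add: scale_left_diff_distrib algebra_simps)
      then have "v = inverse (c - d) *s (z - y)"
        using False by (metis scale_scale left_inverse right_minus_eq scale_one)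
      then show ?thesis
        using v y z by (metis span_diff span_scale)
    qed (use eq in simp)
  qed
  then have "card (span (insert v B)) = card ((UNIV :: 'a set) \<times> span B)"
    by (simp add: span_insert_eq card_image)
  then show ?case
    using insert indep by (simp add: card_cartesian_product)
qed

lemma dim_Un_span: "dim (W \<union> span S) = dim (W \<union> S)"
proof -
  have "span S \<subseteq> span (W \<union> S)"
    by (rule span_mono) blast
  then show ?thesis
    by (intro span_eq_dim) (auto simp: span_eq intro: span_base)
qed

lemma dim_set_le_length: "dim (set vs) \<le> length vs"
  using dim_le_card'[of "set vs"] card_length[of vs] by simp

end

context finite_dimensional_vector_space
begin

lemma card_subspace:
  assumes "subspace U"
  shows "card U = CARD('a) ^ dim U"
proof -
  obtain B where "B \<subseteq> U" "independent B" "U \<subseteq> span B" "card B = dim U"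
    using basis_exists by blast
  then show ?thesis
    using assms card_span_independent[of B] finiteI_independent span_subspace by metis
qed

lemma dim_Un_le: "dim (A \<union> B) \<le> dim A + dim B"
proof -
  obtain BA where BA: "independent BA" "A \<subseteq> span BA" "card BA = dim A"
    using basis_exists by blast
  obtain BB where BB: "independent BB" "B \<subseteq> span BB" "card BB = dim B"
    using basis_exists by blast
  have "A \<union> B \<subseteq> span (BA \<union> BB)"
    using BA(2) BB(2) span_mono[of BA "BA \<union> BB"] span_mono[of BB "BA \<union> BB"] by blast
  then have "dim (A \<union> B) \<le> card (BA \<union> BB)"
    using BA(1) BB(1) by (intro dim_le_card) (auto intro: finiteI_independent)
  also have "\<dots> \<le> dim A + dim B"
    using card_Un_le[of BA BB] BA(3) BB(3) by simp
  finally show ?thesis .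
qed

end

lemma card_lists_by_head:
  assumes "[] \<notin> S"
    and "\<And>x xs. x # xs \<in> S \<longleftrightarrow> x \<in> A \<and> xs \<in> B x"
    and "finite A" and "\<And>x. x \<in> A \<Longrightarrow> finite (B x)"
  shows "card S = (\<Sum>x\<in>A. card (B x))"
proof -
  have "S = (\<lambda>(x, xs). x # xs) ` Sigma A B"
  proof (intro equalityI subsetI)
    fix ys assume "ys \<in> S"
    with assms(1,2) show "ys \<in> (\<lambda>(x, xs). x # xs) ` Sigma A B"
      by (cases ys) force+
  qed (use assms(2) in auto)
  moreover have "inj_on (\<lambda>(x, xs). x # xs) (Sigma A B)"
    by (auto intro: inj_onI)
  ultimately show ?thesis
    using assms(3,4) by (simp add: card_image card_SigmaI)
qed

lemma card_distinct_lists_set_in: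
  assumes "finite F" and "\<And>S. S \<in> F \<Longrightarrow> finite S \<and> card S = r"
  shows "card {xs. distinct xs \<and> set xs \<in> F} = card F * fact r"
proof -
  have "{xs. distinct xs \<and> set xs \<in> F} = (\<Union>S\<in>F. permutations_of_set S)"
    by (auto simp: permutations_of_set_def)
  also have "card \<dots> = (\<Sum>S\<in>F. card (permutations_of_set S))"
    using assms(1)
    by (intro card_UN_disjoint ballI impI finite_permutations_of_set)
      (auto simp: permutations_of_set_def)
  also have "\<dots> = card F * fact r"
    using assms(2) by simp
  finally show ?thesis .
qed

definition indep_extensions :: "('a::field^'n) set \<Rightarrow> ('a^'n) set \<Rightarrow> nat \<Rightarrow> ('a^'n) list set" where
  "indep_extensions U W r =
     {vs. length vs = r \<and> set vs \<subseteq> U \<and> vec.dim (W \<union> set vs) = vec.dim W + r}"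

lemma finite_indep_extensions: "finite (indep_extensions U W r :: ('a::{finite,field}^'n) list set)"
  using finite_lists_length_eq[of "UNIV :: ('a^'n) set" r]
  by (auto intro: finite_subset simp: indep_extensions_def)

lemma Cons_in_indep_extensions:
  "v # vs \<in> indep_extensions U W (Suc r) \<longleftrightarrow>
     v \<in> U - vec.span W \<and> vs \<in> indep_extensions U (insert v W) r"
proof -
  have "vec.dim (insert v W \<union> set vs) \<le> vec.dim (insert v W) + length vs"
    using vec.dim_Un_le[of "insert v W" "set vs"] vec.dim_set_le_length[of vs] by simp
  then show ?thesis
    unfolding indep_extensions_def by (auto simp: vec.dim_insert split: if_splits)
qed

(* Truncated subtraction is harmless: once dim W + i reaches dim U the factor is 0, and
   indeed no such list exists. *)
lemma card_indep_extensions: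
  fixes U W :: "('a::{finite,field}^'n) set"
  assumes "vec.subspace U" and "W \<subseteq> U"
  shows "card (indep_extensions U W r) =
           (\<Prod>i<r. CARD('a) ^ vec.dim U - CARD('a) ^ (vec.dim W + i))"
  using assms(2)
proof (induction r arbitrary: W)
  case 0
  have "indep_extensions U W 0 = {[]}"
    by (auto simp: indep_extensions_def)
  then show ?case by simp
next
  case (Suc r)
  have span_W: "vec.span W \<subseteq> U"
    using Suc.prems assms(1) by (rule vec.span_minimal)
  have "card (indep_extensions U W (Suc r)) =
          (\<Sum>v\<in>U - vec.span W. card (indep_extensions U (insert v W) r))"
  proof (rule card_lists_by_head)
    show "[] \<notin> indep_extensions U W (Suc r)"
      by (simp add: indep_extensions_def)
  qed (simp_all add: Cons_in_indep_extensions finite_indep_extensions)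
  also have "\<dots> = (\<Sum>v\<in>U - vec.span W.
                    \<Prod>i<r. CARD('a) ^ vec.dim U - CARD('a) ^ (vec.dim W + Suc i))"
    using Suc.prems by (intro sum.cong refl) (simp add: Suc.IH vec.dim_insert)
  also have "\<dots> = card (U - vec.span W) *
                   (\<Prod>i<r. CARD('a) ^ vec.dim U - CARD('a) ^ (vec.dim W + Suc i))"
    by simp
  also have "card (U - vec.span W) = CARD('a) ^ vec.dim U - CARD('a) ^ vec.dim W"
    using span_W assms(1) by (simp add: card_Diff_subset vec.card_subspace)
  also have "(CARD('a) ^ vec.dim U - CARD('a) ^ vec.dim W) *
               (\<Prod>i<r. CARD('a) ^ vec.dim U - CARD('a) ^ (vec.dim W + Suc i))
             = (\<Prod>i<Suc r. CARD('a) ^ vec.dim U - CARD('a) ^ (vec.dim W + i))"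
    by (subst prod.lessThan_Suc_shift) simp
  finally show ?case .
qed

definition indep_subspaces :: "('a::field^'n) set \<Rightarrow> nat \<Rightarrow> ('a^'n) set set" where
  "indep_subspaces W l = {L \<in> subspaces_dim l. vec.dim (W \<union> L) = vec.dim W + l}"

lemma span_indep_extensions_empty:
  assumes "L \<in> subspaces_dim l" and "vs \<in> indep_extensions L {} l"
  shows "vec.span (set vs) = L"
proof -
  have "vec.span (set vs) = vec.span L"
    using assms by (intro vec.dim_eq_span) (auto simp: subspaces_dim_def indep_extensions_def)
  then show ?thesis
    using assms(1) by (simp add: subspaces_dim_def)
qed

lemma indep_extensions_UNIV_eq_UN:
  "indep_extensions UNIV W l = (\<Union>L\<in>indep_subspaces W l. indep_extensions L {} l)"
proof (intro equalityI subsetI)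
  fix vs assume vs: "vs \<in> indep_extensions UNIV W l"
  then have "vec.dim (W \<union> set vs) \<le> vec.dim W + vec.dim (set vs)" "vec.dim (set vs) \<le> l"
    using vec.dim_Un_le[of W "set vs"] vec.dim_set_le_length[of vs]
    by (auto simp: indep_extensions_def)
  then have "vec.dim (set vs) = l"
    using vs by (simp add: indep_extensions_def)
  then have "vec.span (set vs) \<in> indep_subspaces W l" "vs \<in> indep_extensions (vec.span (set vs)) {} l"
    using vs vec.dim_Un_span[of W "set vs"] vec.span_superset[of "set vs"]
    by (auto simp: indep_subspaces_def subspaces_dim_def indep_extensions_def)
  then show "vs \<in> (\<Union>L\<in>indep_subspaces W l. indep_extensions L {} l)"
    by blast
next
  fix vs assume "vs \<in> (\<Union>L\<in>indep_subspaces W l. indep_extensions L {} l)"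
  then obtain L where L: "L \<in> indep_subspaces W l" and vs: "vs \<in> indep_extensions L {} l"
    by blast
  then have "vec.span (set vs) = L"
    by (intro span_indep_extensions_empty) (auto simp: indep_subspaces_def)
  then show "vs \<in> indep_extensions UNIV W l"
    using L vs vec.dim_Un_span[of W "set vs"]
    by (auto simp: indep_subspaces_def indep_extensions_def)
qed

lemma card_indep_subspaces:
  fixes W :: "('a::{finite,field}^'n) set"
  shows "card (indep_subspaces W l) * (\<Prod>i<l. CARD('a) ^ l - CARD('a) ^ i) =
           (\<Prod>i<l. CARD('a) ^ CARD('n) - CARD('a) ^ (vec.dim W + i))"
proof -
  have "(\<Prod>i<l. CARD('a) ^ CARD('n) - CARD('a) ^ (vec.dim W + i)) =
          card (indep_extensions UNIV W l)"
    using card_indep_extensions[of UNIV W l] by (simp add: card_cart_basis)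
  also have "\<dots> = (\<Sum>L\<in>indep_subspaces W l. card (indep_extensions L {} l))"
    unfolding indep_extensions_UNIV_eq_UN
  proof (rule card_UN_disjoint)
    show "\<forall>L\<in>indep_subspaces W l. \<forall>L'\<in>indep_subspaces W l. L \<noteq> L' \<longrightarrow>
            indep_extensions L {} l \<inter> indep_extensions L' {} l = {}"
    proof (intro ballI impI)
      fix L L' assume "L \<in> indep_subspaces W l" "L' \<in> indep_subspaces W l" "L \<noteq> L'"
      then show "indep_extensions L {} l \<inter> indep_extensions L' {} l = {}"
        using span_indep_extensions_empty[of L l] span_indep_extensions_empty[of L' l]
        by (auto simp: indep_subspaces_def)
    qed
  qed (simp_all add: finite_indep_extensions)
  also have "\<dots> = (\<Sum>L\<in>indep_subspaces W l. \<Prod>i<l. CARD('a) ^ l - CARD('a) ^ i)"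
    using card_indep_extensions[of _ "{} :: ('a^'n) set" l]
    by (intro sum.cong refl) (simp add: indep_subspaces_def subspaces_dim_def)
  finally show ?thesis
    by simp
qed

lemma dim_Un_Union_subspaces_le:
  fixes W :: "('a::field^'n) set"
  assumes "finite S" and "S \<subseteq> subspaces_dim l"
  shows "vec.dim (W \<union> \<Union>S) \<le> vec.dim W + card S * l"
  using assms
proof (induction S arbitrary: W rule: finite_induct)
  case (insert L S)
  have "vec.dim (W \<union> \<Union>(insert L S)) = vec.dim ((W \<union> L) \<union> \<Union>S)"
    by (simp add: Un_assoc)
  also have "\<dots> \<le> vec.dim (W \<union> L) + card S * l"
    using insert by simp
  also have "\<dots> \<le> vec.dim W + l + card S * l"
    using vec.dim_Un_le[of W L] insert.prems by (simp add: subspaces_dim_def)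
  finally show ?case
    using insert.hyps by simp
qed simp

definition indep_subspace_lists :: "('a::field^'n) set \<Rightarrow> nat \<Rightarrow> nat \<Rightarrow> ('a^'n) set list set" where
  "indep_subspace_lists W l r =
     {Ls. length Ls = r \<and> set Ls \<subseteq> subspaces_dim l \<and> vec.dim (W \<union> \<Union>(set Ls)) = vec.dim W + r * l}"

lemma finite_indep_subspace_lists:
  "finite (indep_subspace_lists W l r :: ('a::{finite,field}^'n) set list set)"
  using finite_lists_length_eq[of "UNIV :: ('a^'n) set set" r]
  by (auto intro: finite_subset simp: indep_subspace_lists_def)

lemma Cons_in_indep_subspace_lists:
  "L # Ls \<in> indep_subspace_lists W l (Suc r) \<longleftrightarrow>
     L \<in> indep_subspaces W l \<and> Ls \<in> indep_subspace_lists (W \<union> L) l r"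
proof -
  have "W \<union> \<Union>(set (L # Ls)) = (W \<union> L) \<union> \<Union>(set Ls)"
    by auto
  moreover have "vec.dim (W \<union> L \<union> \<Union>(set Ls)) \<le> vec.dim (W \<union> L) + length Ls * l"
    if "set Ls \<subseteq> subspaces_dim l"
    using dim_Un_Union_subspaces_le[OF _ that, of "W \<union> L"] card_length[of Ls]
    by (meson add_left_mono le_trans List.finite_set mult_le_mono1)
  moreover have "vec.dim (W \<union> L) \<le> vec.dim W + l" if "L \<in> subspaces_dim l"
    using vec.dim_Un_le[of W L] that by (simp add: subspaces_dim_def)
  ultimately show ?thesis
    unfolding indep_subspace_lists_def indep_subspaces_def by auto
qed

lemma card_indep_subspace_lists:
  fixes W :: "('a::{finite,field}^'n) set"
  shows "card (indep_subspace_lists W l r) * (\<Prod>i<l. CARD('a) ^ l - CARD('a) ^ i) ^ r =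
           (\<Prod>j<r. \<Prod>i<l. CARD('a) ^ CARD('n) - CARD('a) ^ (vec.dim W + j * l + i))"
proof (induction r arbitrary: W)
  case 0
  have "indep_subspace_lists W l 0 = {[]}"
    by (auto simp: indep_subspace_lists_def)
  then show ?case by simp
next
  case (Suc r)
  define N where "N = (\<Prod>i<l. CARD('a) ^ l - CARD('a) ^ i)"
  define A where "A e = (\<Prod>i<l. CARD('a) ^ CARD('n) - CARD('a) ^ (e + i))" for e
  have "card (indep_subspace_lists W l (Suc r)) =
          (\<Sum>L\<in>indep_subspaces W l. card (indep_subspace_lists (W \<union> L) l r))"
  proof (rule card_lists_by_head)
    show "[] \<notin> indep_subspace_lists W l (Suc r)"
      by (simp add: indep_subspace_lists_def)
  qed (simp_all add: Cons_in_indep_subspace_lists finite_indep_subspace_lists)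
  then have "card (indep_subspace_lists W l (Suc r)) * N ^ Suc r =
               (\<Sum>L\<in>indep_subspaces W l. card (indep_subspace_lists (W \<union> L) l r) * N ^ r) * N"
    by (simp add: sum_distrib_left sum_distrib_right mult_ac)
  also have "\<dots> = card (indep_subspaces W l) * N * (\<Prod>j<r. A (vec.dim W + Suc j * l))"
    using Suc.IH unfolding N_def A_def
    by (simp add: indep_subspaces_def add.assoc add.left_commute)
  also have "\<dots> = A (vec.dim W) * (\<Prod>j<r. A (vec.dim W + Suc j * l))"
    unfolding N_def A_def by (simp only: card_indep_subspaces)
  also have "\<dots> = (\<Prod>j<Suc r. A (vec.dim W + j * l))"
    by (subst prod.lessThan_Suc_shift) simp
  finally show ?case
    unfolding N_def A_def by simp
qed

definition indep_extension_family :: "('a::field^'n) set \<Rightarrow> nat \<Rightarrow> nat \<Rightarrow> ('a^'n) set set set" where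
  "indep_extension_family W l r =
     {S. S \<subseteq> subspaces_dim l \<and> card S = r \<and> vec.dim (W \<union> \<Union>S) = vec.dim W + r * l}"

lemma indep_subspace_lists_eq_distinct:
  fixes W :: "('a::field^'n) set"
  assumes "0 < l"
  shows "indep_subspace_lists W l r = {Ls. distinct Ls \<and> set Ls \<in> indep_extension_family W l r}"
proof (intro equalityI subsetI CollectI conjI)
  fix Ls assume Ls: "Ls \<in> indep_subspace_lists W l r"
  then have "vec.dim W + r * l \<le> vec.dim W + card (set Ls) * l"
    using dim_Un_Union_subspaces_le[of "set Ls" l W] by (simp add: indep_subspace_lists_def)
  then have "length Ls \<le> card (set Ls)"
    using Ls assms by (simp add: indep_subspace_lists_def)
  then show "distinct Ls"
    using card_distinct card_length le_antisym by blast
  then show "set Ls \<in> indep_extension_family W l r"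
    using Ls by (simp add: indep_subspace_lists_def indep_extension_family_def distinct_card)
qed (auto simp: indep_subspace_lists_def indep_extension_family_def distinct_card)

lemma card_indep_extension_family:
  fixes W :: "('a::{finite,field}^'n) set"
  assumes "0 < l"
  shows "card (indep_extension_family W l r) * fact r * (\<Prod>i<l. CARD('a) ^ l - CARD('a) ^ i) ^ r =
           (\<Prod>j<r. \<Prod>i<l. CARD('a) ^ CARD('n) - CARD('a) ^ (vec.dim W + j * l + i))"
proof -
  have "card (indep_subspace_lists W l r) = card (indep_extension_family W l r) * fact r"
    unfolding indep_subspace_lists_eq_distinct[OF assms]
    by (rule card_distinct_lists_set_in) (auto simp: indep_extension_family_def)
  then show ?thesis
    using card_indep_subspace_lists[of W l r] by simp
qed

lemma of_nat_prod_pow_diff: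
  assumes "1 < q" and "e + l \<le> k"
  shows "real (\<Prod>i<l. q ^ k - q ^ (e + i)) =
           real q ^ (e * l) * (\<Prod>i<l. real q ^ i * (real q - 1)) * (\<Prod>i<l. qbin1 q (k - e - i))"
proof -
  have "real (q ^ k - q ^ (e + i)) = real q ^ e * (real q ^ i * (real q - 1)) * qbin1 q (k - e - i)"
    if "i < l" for i
  proof -
    have "q ^ (e + i) \<le> q ^ k"
      using that assms by (intro power_increasing) auto
    moreover have "real q ^ k = real q ^ (e + i) * real q ^ (k - e - i)"
      using that assms by (simp flip: power_add)
    ultimately show ?thesis
      using assms unfolding qbin1_def by (simp add: of_nat_diff field_simps power_add)
  qed
  then show ?thesis
    by (simp add: prod.distrib power_mult)
qed

lemma prod_lessThan_mult:
  "(\<Prod>t<r * l. f t) = (\<Prod>j<r. \<Prod>i<l. f (j * l + i :: nat))"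
  by (simp add: prod.nat_group[symmetric] prod.atLeastLessThan_shift_0 atLeast0LessThan comp_def)

lemma sum_block_exponent:
  fixes r d l :: nat
  shows "(\<Sum>j<r. (d + j * l) * l) = r * d * l + r * (r - 1) * l^2 div 2"
proof -
  have "2 * (\<Sum>j<r. j) = r * (r - 1)"
  proof (induction r)
    case (Suc r)
    then show ?case by (cases r) (simp_all add: algebra_simps)
  qed simp
  then have "r * (r - 1) * l^2 div 2 = (\<Sum>j<r. j) * l^2"
    by (metis mult.assoc nonzero_mult_div_cancel_left zero_neq_numeral)
  then show ?thesis
    by (simp add: sum.distrib sum_distrib_right[symmetric] algebra_simps power2_eq_square)
qed

lemma fact_mult_eq_prod_choose:
  "(fact (r * l) :: nat) = (\<Prod>i<r. (r - i) * l choose l) * fact l ^ r"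
proof (induction r)
  case (Suc r)
  have "(fact (Suc r * l) :: nat) = (Suc r * l choose l) * fact l * fact (r * l)"
    using binomial_fact_lemma[of l "Suc r * l"] by (simp add: mult_ac)
  also have "\<dots> = (\<Prod>i<Suc r. (Suc r - i) * l choose l) * fact l ^ Suc r"
    by (simp add: Suc.IH prod.lessThan_Suc_shift del: prod.lessThan_Suc)
  finally show ?case .
qed simp

lemma qbin1_pos:
  assumes "1 < q" and "0 < a"
  shows "0 < qbin1 q a"
  using assms by (simp add: qbin1_def one_less_power)

lemma card_field_gt_1: "1 < CARD('a::{finite,field})"
  using card_mono[of "UNIV :: 'a set" "{0, 1}"] by simp

(* The factor fact l ^ r * (\<Prod>i<r. (r - i) * l choose l) / fact (r * l) equals 1
   (fact_mult_eq_prod_choose); it is kept only to match the shape of the paper's formula. *)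
lemma card_indep_extension_family_closed_form:
  fixes W :: "('a::{finite,field}^'n) set"
  defines "q \<equiv> CARD('a)" and "k \<equiv> CARD('n)" and "d \<equiv> vec.dim W"
  assumes "0 < l" and "d + r * l \<le> k"
  shows "real (card (indep_extension_family W l r)) =
           (fact l ^ r * real q ^ (r * d * l + r * (r - 1) * l^2 div 2)) / (fact (r * l) * fact r)
           * ((\<Prod>i<r * l. qbin1 q (k - d - i)) / (\<Prod>i<l. qbin1 q (l - i)) ^ r)
           * (\<Prod>i<r. real ((r - i) * l choose l))"
proof -
  define E where "E = r * d * l + r * (r - 1) * l^2 div 2"
  define \<Phi> where "\<Phi> = (\<Prod>i<l. real q ^ i * (real q - 1))"
  define P where "P = (\<Prod>i<l. qbin1 q (l - i))"
  define T where "T = (\<Prod>i<r * l. qbin1 q (k - d - i))"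
  define y where "y = (\<Prod>i<r. real ((r - i) * l choose l))"
  have q: "1 < q"
    unfolding q_def by (rule card_field_gt_1)
  have "real (card (indep_extension_family W l r) * fact r * (\<Prod>i<l. q ^ l - q ^ i) ^ r) =
          real (\<Prod>j<r. \<Prod>i<l. q ^ k - q ^ (d + j * l + i))"
    unfolding q_def k_def d_def card_indep_extension_family[OF assms(4)] ..
  then have "real (card (indep_extension_family W l r)) * fact r * real (\<Prod>i<l. q ^ l - q ^ i) ^ r =
               real (\<Prod>j<r. \<Prod>i<l. q ^ k - q ^ (d + j * l + i))"
    by (simp only: of_nat_mult of_nat_fact of_nat_power)
  also have "real (\<Prod>j<r. \<Prod>i<l. q ^ k - q ^ (d + j * l + i)) =
               (\<Prod>j<r. real q ^ ((d + j * l) * l) * \<Phi> * (\<Prod>i<l. qbin1 q (k - (d + j * l) - i)))"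
  proof (subst of_nat_prod, intro prod.cong refl)
    fix j assume "j \<in> {..<r}"
    then have "d + j * l + l \<le> k"
      using assms(5) mult_le_mono1[of "Suc j" r l] by simp
    then show "real (\<Prod>i<l. q ^ k - q ^ (d + j * l + i)) =
                 real q ^ ((d + j * l) * l) * \<Phi> * (\<Prod>i<l. qbin1 q (k - (d + j * l) - i))"
      unfolding \<Phi>_def by (rule of_nat_prod_pow_diff[OF q])
  qed
  also have "\<dots> = (\<Prod>j<r. real q ^ ((d + j * l) * l)) * \<Phi> ^ r *
                   (\<Prod>j<r. \<Prod>i<l. qbin1 q (k - d - (j * l + i)))"
    by (simp add: prod.distrib diff_diff_left add.assoc)
  also have "\<dots> = real q ^ E * \<Phi> ^ r * T"
    unfolding E_def T_def prod_lessThan_mult sum_block_exponent[symmetric] power_sum ..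
  also have "real (\<Prod>i<l. q ^ l - q ^ i) = \<Phi> * P"
    using of_nat_prod_pow_diff[OF q, of 0 l l] unfolding \<Phi>_def P_def by simp
  finally have "\<Phi> ^ r * (real (card (indep_extension_family W l r)) * fact r * P ^ r) =
                  \<Phi> ^ r * (real q ^ E * T)"
    by (simp add: power_mult_distrib mult_ac)
  moreover have "\<Phi> \<noteq> 0"
    unfolding \<Phi>_def using q by simp
  ultimately have card_eq: "real (card (indep_extension_family W l r)) * fact r * P ^ r = real q ^ E * T"
    by simp
  have "real (fact (r * l)) = real ((\<Prod>i<r. (r - i) * l choose l) * fact l ^ r)"
    by (rule arg_cong[OF fact_mult_eq_prod_choose])
  then have fact_eq: "fact (r * l) = y * fact l ^ r"
    unfolding y_def by (simp only: of_nat_mult of_nat_fact of_nat_power of_nat_prod)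
  then have "y \<noteq> 0"
    by (metis fact_nonzero mult_eq_0_iff)
  moreover have "0 < P"
    unfolding P_def using q by (intro prod_pos qbin1_pos) auto
  ultimately show ?thesis
    using card_eq fact_eq unfolding E_def[symmetric] P_def[symmetric] T_def[symmetric] y_def[symmetric]
    by (simp add: field_simps)
qed

lemma indep_family_eq_indep_extension_family:
  "indep_family l r = indep_extension_family {} l r"
  by (simp add: indep_family_def indep_extension_family_def)

lemma neighbours_eq_indep_extension_family:
  fixes X :: "('a::{finite,field}^'n) set set"
  assumes "0 < l" and X: "X \<in> indep_family l n"
  shows "{Y \<in> indep_family l m. X \<union> Y \<in> indep_family l (n + m)} =
           indep_extension_family (\<Union>X) l m"
proof (intro equalityI subsetI)
  fix Y assume "Y \<in> {Y \<in> indep_family l m. X \<union> Y \<in> indep_family l (n + m)}"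
  then show "Y \<in> indep_extension_family (\<Union>X) l m"
    using X by (auto simp: indep_family_def indep_extension_family_def Union_Un_distrib algebra_simps)
next
  fix Y assume Y: "Y \<in> indep_extension_family (\<Union>X) l m"
  have X': "X \<subseteq> subspaces_dim l" "card X = n" "vec.dim (\<Union>X) = n * l"
    using X by (auto simp: indep_family_def)
  have Y': "Y \<subseteq> subspaces_dim l" "card Y = m" "vec.dim (\<Union>X \<union> \<Union>Y) = (n + m) * l"
    using Y X'(3) by (auto simp: indep_extension_family_def algebra_simps)
  have "vec.dim (\<Union>Y) \<le> m * l"
    using dim_Un_Union_subspaces_le[of Y l "{}"] Y' by simp
  then have "vec.dim (\<Union>Y) = m * l"
    using vec.dim_Un_le[of "\<Union>X" "\<Union>Y"] X'(3) Y'(3) by (simp add: add_mult_distrib)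
  moreover have "card (X \<union> Y) = n + m"
  proof -
    have "(n + m) * l \<le> card (X \<union> Y) * l"
      using dim_Un_Union_subspaces_le[of "X \<union> Y" l "{}"] X' Y' by (simp add: Union_Un_distrib)
    then show ?thesis
      using card_Un_le[of X Y] X'(2) Y'(2) assms(1) by simp
  qed
  ultimately show "Y \<in> {Y \<in> indep_family l m. X \<union> Y \<in> indep_family l (n + m)}"
    using X' Y' by (simp add: indep_family_def Union_Un_distrib)
qed

lemma card_indep_family:
  assumes "0 < l" and "r * l \<le> CARD('n)"
  shows "real (card (indep_family l r :: ('a::{finite,field}^'n) set set set)) =
           (fact l ^ r * real CARD('a) ^ (r * (r - 1) * l^2 div 2)) / (fact (r * l) * fact r)
           * ((\<Prod>i<r * l. qbin1 CARD('a) (CARD('n) - i)) / (\<Prod>i<l. qbin1 CARD('a) (l - i)) ^ r)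
           * (\<Prod>i<r. real ((r - i) * l choose l))"
  using card_indep_extension_family_closed_form[of l "{}" r] assms
  by (simp add: indep_family_eq_indep_extension_family)

lemma card_neighbours:
  fixes X :: "('a::{finite,field}^'n) set set"
  assumes "0 < l" and "X \<in> indep_family l n" and "n * l + m * l \<le> CARD('n)"
  shows "real (card {Y \<in> indep_family l m. X \<union> Y \<in> indep_family l (n + m)}) =
           (fact l ^ m * real CARD('a) ^ (m * (n * l) * l + m * (m - 1) * l^2 div 2))
             / (fact (m * l) * fact m)
           * ((\<Prod>i<m * l. qbin1 CARD('a) (CARD('n) - n * l - i)) / (\<Prod>i<l. qbin1 CARD('a) (l - i)) ^ m)
           * (\<Prod>i<m. real ((m - i) * l choose l))"
proof -
  have "vec.dim (\<Union>X) = n * l"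
    using assms(2) by (simp add: indep_family_def)
  then show ?thesis
    using card_indep_extension_family_closed_form[of l "\<Union>X" m] assms
    by (simp add: neighbours_eq_indep_extension_family)
qed

theorem lemma12:
  fixes k m n l q :: nat
  assumes "0 < k" "0 < m" "0 < n" "0 < l"
    and "n * l + m * l \<le> k"
    and "k = CARD('n::finite)"
    and "q = CARD('a::{finite,field})"
  defines "XX \<equiv> (indep_family l n :: ('a^'n) set set set)"
      and "YY \<equiv> (indep_family l m :: ('a^'n) set set set)"
      and "ZZ \<equiv> (indep_family l (n + m) :: ('a^'n) set set set)"
      and "P \<equiv> (\<Prod>i<l. qbin1 q (l - i))"
      and "y1 \<equiv> (\<Prod>i<n. real ((n - i) * l choose l))"
      and "y2 \<equiv> (\<Prod>i<m. real ((m - i) * l choose l))"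
  shows "real (card XX) =
           (fact l ^ n * real q ^ (n * (n - 1) * l^2 div 2)) / (fact (n * l) * fact n)
           * ((\<Prod>i<n * l. qbin1 q (k - i)) / P ^ n) * y1 \<and>
         real (card YY) =
           (fact l ^ m * real q ^ (m * (m - 1) * l^2 div 2)) / (fact (m * l) * fact m)
           * ((\<Prod>i<m * l. qbin1 q (k - i)) / P ^ m) * y2 \<and>
         (\<forall>X\<in>XX. real (card {Y \<in> YY. X \<union> Y \<in> ZZ}) =
           (fact l ^ m * real q ^ (m * l^2 * (m - 1) div 2 + m * l^2 * n)) / (fact (m * l) * fact m)
           * ((\<Prod>i<m * l. qbin1 q (k - n * l - i)) / P ^ m) * y2)"
proof -
  have "m * (n * l) * l + m * (m - 1) * l^2 div 2 = m * l^2 * (m - 1) div 2 + m * l^2 * n"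
    by (simp add: power2_eq_square mult_ac)
  then show ?thesis
    using card_indep_family[where 'a='a and 'n='n, of l n] card_indep_family[where 'a='a and 'n='n, of l m]
      card_neighbours[of l _ n m] assms(4-7)
    unfolding XX_def YY_def ZZ_def P_def y1_def y2_def by auto
qed

end
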